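(* Let $R$ be a ring. The set $\mathrm{Den}_l(R,0)$, ordered by inclusion and with the product $S_1S_2:=\langle S_1,S_2\rangle$ (the multiplicative subsemigroup of $R$ generated by $S_1$ and $S_2$), is an abelian monoid with identity $\{1\}$ and a complete lattice, in which $S_1S_2=S_1\vee S_2$ for all $S_1,S_2\in\mathrm{Den}_l(R,0)$, and for any family $S_i\in \mathrm{Den}_l(R,0)$, $i\in I$, the meet is $\bigwedge_{i\in I}S_i=\bigvee\{S\in \mathrm{Den}_l(R,0)\mid S\subseteq \bigcap_{i\in I}S_i\}$.
   Context: Rings are associative with $1$. A multiplicatively closed subset $S$ of a ring $R$ is a subset with $1\in S$, $0\notin S$, closed under multiplication. It is a left Ore set if $Sr\cap Rs\neq\emptyset$ for all $r\in R$, $s\in S$; then $\mathrm{ass}(S):=\{r\in R\mid sr=0 \text{ for some } s\in S\}$. A left Ore set $S$ is a left denominator set if $rs=0$ with $r\in R$, $s\in S$ implies $tr=0$ for some $t\in S$. $\mathrm{Den}_l(R,0)$ is the set of left denominator sets $S$ with $\mathrm{ass}(S)=0$ (equivalently, left denominator sets consisting of regular elements). *)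

theory Defs
  imports Main "HOL-Algebra.Group" "HOL-Algebra.Complete_Lattice"
begin

text \<open>Rings: the type class ring_1 (associative ring with 1; note 1 \<noteq> 0 is part of ring_1).\<close>

definition mult_closed :: "'a::ring_1 set \<Rightarrow> bool" where
  "mult_closed S \<longleftrightarrow> 1 \<in> S \<and> 0 \<notin> S \<and> (\<forall>a\<in>S. \<forall>b\<in>S. a * b \<in> S)"

definition left_ore :: "'a::ring_1 set \<Rightarrow> bool" where
  "left_ore S \<longleftrightarrow> mult_closed S \<and>
     (\<forall>r. \<forall>s\<in>S. \<exists>s'\<in>S. \<exists>r'. s' * r = r' * s)"

definition ass :: "'a::ring_1 set \<Rightarrow> 'a set" where
  "ass S = {r. \<exists>s\<in>S. s * r = 0}"

definition left_den :: "'a::ring_1 set \<Rightarrow> bool" where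
  "left_den S \<longleftrightarrow> left_ore S \<and>
     (\<forall>r. \<forall>s\<in>S. r * s = 0 \<longrightarrow> (\<exists>t\<in>S. t * r = 0))"

definition Den_l0 :: "'a::ring_1 set set" where
  "Den_l0 = {S. left_den S \<and> ass S = {0}}"

definition gen_subsemigroup :: "'a::ring_1 set \<Rightarrow> 'a set" where
  "gen_subsemigroup A = \<Inter>{T. A \<subseteq> T \<and> (\<forall>x\<in>T. \<forall>y\<in>T. x * y \<in> T)}"

definition den_prod :: "'a::ring_1 set \<Rightarrow> 'a set \<Rightarrow> 'a set" where
  "den_prod S1 S2 = gen_subsemigroup (S1 \<union> S2)"

definition Den_monoid :: "'a::ring_1 set monoid" where
  "Den_monoid = \<lparr>carrier = Den_l0, mult = den_prod, one = {1}\<rparr>"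

definition Den_order :: "'a::ring_1 set gorder" where
  "Den_order = \<lparr>carrier = Den_l0, eq = (=), le = (\<subseteq>)\<rparr>"

end

theory Submission
  imports Defs
begin

text \<open>A set in \<open>Den\<^sub>l(R,0)\<close> consists of regular elements, and regularity as well as the
left Ore condition relative to a fixed multiplicatively closed set pass to products. Hence
the subsemigroup generated by \<open>1\<close> and any union of sets in \<open>Den\<^sub>l(R,0)\<close> lies again in
\<open>Den\<^sub>l(R,0)\<close>: it is the supremum under inclusion. A partial order with all suprema is a
complete lattice whose infima are the suprema of the lower bounds, and the product
\<open>S\<^sub>1S\<^sub>2\<close> is the supremum of \<open>{S\<^sub>1, S\<^sub>2}\<close>.\<close>

lemma (in partial_order) greatest_Lower_if_least_Upper_Lower:
  assumes A: "A \<subseteq> carrier L" and s: "least L s (Upper L (Lower L A))"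
  shows "greatest L s (Lower L A)"
proof -
  have upper: "a \<in> Upper L (Lower L A)" if "a \<in> A" for a
  proof (rule Upper_memI)
    fix y assume "y \<in> Lower L A"
    then show "y \<sqsubseteq> a" using Lower_memD[OF _ that A] by blast
  next
    show "a \<in> carrier L" using that A by blast
  qed
  have "s \<in> Lower L A"
    by (rule Lower_memI) (use least_le[OF s upper] least_closed[OF s] in auto)
  moreover have "x \<sqsubseteq> s" if "x \<in> Lower L A" for x
    using least_Upper_above[OF s that Lower_closed] .
  ultimately show ?thesis unfolding greatest_def by blast
qed

lemma (in partial_order) complete_latticeI_sup:
  assumes sup_exists: "\<And>A. A \<subseteq> carrier L \<Longrightarrow> \<exists>s. least L s (Upper L A)"
  shows "complete_lattice L"
proof (rule complete_latticeI)
  fix A assume A: "A \<subseteq> carrier L"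
  then show "\<exists>s. least L s (Upper L A)" by (rule sup_exists)
  obtain s where "least L s (Upper L (Lower L A))"
    using sup_exists[OF Lower_closed] by blast
  then show "\<exists>i. greatest L i (Lower L A)"
    using greatest_Lower_if_least_Upper_Lower[OF A] by blast
qed

lemma (in partial_order) sup_eqI: "least L s (Upper L A) \<Longrightarrow> \<Squnion>A = s"
  unfolding sup_def by (rule some_equality) (auto intro: least_unique)

lemma (in complete_lattice) inf_eq_sup_Lower:
  assumes "A \<subseteq> carrier L"
  shows "\<Sqinter>A = \<Squnion>(Lower L A)"
  using inf_glb[OF assms]
    greatest_Lower_if_least_Upper_Lower[OF assms sup_lub[OF Lower_closed]]
  by (rule greatest_unique)

lemma gen_subsemigroup_subset: "A \<subseteq> gen_subsemigroup A"
  unfolding gen_subsemigroup_def by blast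

lemma gen_subsemigroup_mult:
  "x \<in> gen_subsemigroup A \<Longrightarrow> y \<in> gen_subsemigroup A \<Longrightarrow> x * y \<in> gen_subsemigroup A"
  unfolding gen_subsemigroup_def by blast

lemma gen_subsemigroup_least:
  assumes "A \<subseteq> T" and "\<And>x y. x \<in> T \<Longrightarrow> y \<in> T \<Longrightarrow> x * y \<in> T"
  shows "gen_subsemigroup A \<subseteq> T"
  unfolding gen_subsemigroup_def using assms by (intro Inter_lower) blast

lemma gen_subsemigroup_induct [consumes 1, case_names base mult]:
  assumes "x \<in> gen_subsemigroup A"
    and "\<And>a. a \<in> A \<Longrightarrow> P a"
    and "\<And>x y. P x \<Longrightarrow> P y \<Longrightarrow> P (x * y)"
  shows "P x"
proof -
  have "gen_subsemigroup A \<subseteq> {x. P x}"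
    by (rule gen_subsemigroup_least) (use assms(2,3) in auto)
  with assms(1) show ?thesis by blast
qed

lemma gen_subsemigroup_mono: "A \<subseteq> B \<Longrightarrow> gen_subsemigroup A \<subseteq> gen_subsemigroup B"
  using gen_subsemigroup_subset
  by (intro gen_subsemigroup_least) (blast, rule gen_subsemigroup_mult)

lemma gen_subsemigroup_eq:
  "(\<And>x y. x \<in> T \<Longrightarrow> y \<in> T \<Longrightarrow> x * y \<in> T) \<Longrightarrow> gen_subsemigroup T = T"
  using gen_subsemigroup_least[OF order_refl] gen_subsemigroup_subset by (rule antisym)

lemma gen_subsemigroup_Un_gen_left:
  "gen_subsemigroup (gen_subsemigroup A \<union> B) = gen_subsemigroup (A \<union> B)"
proof (rule antisym)
  have "gen_subsemigroup A \<union> B \<subseteq> gen_subsemigroup (A \<union> B)"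
    using gen_subsemigroup_mono[of A "A \<union> B"] gen_subsemigroup_subset[of "A \<union> B"] by blast
  then show "gen_subsemigroup (gen_subsemigroup A \<union> B) \<subseteq> gen_subsemigroup (A \<union> B)"
    by (rule gen_subsemigroup_least) (rule gen_subsemigroup_mult)
  show "gen_subsemigroup (A \<union> B) \<subseteq> gen_subsemigroup (gen_subsemigroup A \<union> B)"
    using gen_subsemigroup_subset[of A] by (intro gen_subsemigroup_mono) blast
qed

definition regular :: "'a::semiring_0 \<Rightarrow> bool" where
  "regular s \<longleftrightarrow> (\<forall>r. s * r = 0 \<longrightarrow> r = 0) \<and> (\<forall>r. r * s = 0 \<longrightarrow> r = 0)"

lemma regular_mult: "regular a \<Longrightarrow> regular b \<Longrightarrow> regular (a * b)"
  unfolding regular_def by (metis mult.assoc)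

definition left_ore_elem :: "'a::semigroup_mult set \<Rightarrow> 'a \<Rightarrow> bool" where
  "left_ore_elem T s \<longleftrightarrow> (\<forall>r. \<exists>t\<in>T. \<exists>r'. t * r = r' * s)"

lemma left_ore_elem_mono: "T \<subseteq> T' \<Longrightarrow> left_ore_elem T s \<Longrightarrow> left_ore_elem T' s"
  unfolding left_ore_elem_def by blast

lemma left_ore_elem_one: "(1::'a::monoid_mult) \<in> T \<Longrightarrow> left_ore_elem T 1"
  unfolding left_ore_elem_def by (metis mult_1_left mult_1_right)

lemma left_ore_elem_mult:
  assumes T: "\<And>x y. x \<in> T \<Longrightarrow> y \<in> T \<Longrightarrow> x * y \<in> T"
    and "left_ore_elem T a" and "left_ore_elem T b"
  shows "left_ore_elem T (a * b)"
  unfolding left_ore_elem_def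
proof
  fix r
  obtain t1 r1 where t1: "t1 \<in> T" "t1 * r = r1 * b"
    using \<open>left_ore_elem T b\<close> unfolding left_ore_elem_def by blast
  obtain t2 r2 where t2: "t2 \<in> T" "t2 * r1 = r2 * a"
    using \<open>left_ore_elem T a\<close> unfolding left_ore_elem_def by blast
  have "(t2 * t1) * r = (t2 * r1) * b"
    by (simp add: mult.assoc t1(2))
  also have "\<dots> = r2 * (a * b)"
    by (simp add: t2(2) flip: mult.assoc)
  finally have "(t2 * t1) * r = r2 * (a * b)" .
  moreover have "t2 * t1 \<in> T" using T t2(1) t1(1) .
  ultimately show "\<exists>t\<in>T. \<exists>r'. t * r = r' * (a * b)" by blast
qed

lemma Den_l0_iff:
  "S \<in> Den_l0 \<longleftrightarrow> 1 \<in> S \<and> (\<forall>a\<in>S. \<forall>b\<in>S. a * b \<in> S) \<and> (\<forall>s\<in>S. regular s \<and> left_ore_elem S s)"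
  (is "_ \<longleftrightarrow> ?one \<and> ?closed \<and> ?reg_ore")
proof
  assume "S \<in> Den_l0"
  then have ore: "left_ore S" and den: "\<forall>r. \<forall>s\<in>S. r * s = 0 \<longrightarrow> (\<exists>t\<in>S. t * r = 0)"
    and ass: "ass S = {0}"
    by (simp_all add: Den_l0_def left_den_def)
  have ass_zero: "r = 0" if "s \<in> S" "s * r = 0" for s r
  proof -
    from that have "r \<in> ass S" by (auto simp: ass_def)
    with ass show "r = 0" by simp
  qed
  have "regular s" if "s \<in> S" for s
    unfolding regular_def using ass_zero den that by blast
  moreover have "left_ore_elem S s" if "s \<in> S" for s
    using ore that unfolding left_ore_def left_ore_elem_def by blast
  moreover have "?one \<and> ?closed"
    using ore unfolding left_ore_def mult_closed_def by blast
  ultimately show "?one \<and> ?closed \<and> ?reg_ore" by blast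
next
  assume "?one \<and> ?closed \<and> ?reg_ore"
  then have one: ?one and closed: ?closed and regular: "\<And>s. s \<in> S \<Longrightarrow> regular s"
    and ore: "\<And>s. s \<in> S \<Longrightarrow> left_ore_elem S s"
    by blast+
  have "\<not> regular (0::'a)"
    by (metis regular_def mult_zero_left zero_neq_one)
  with one closed regular have "mult_closed S"
    unfolding mult_closed_def by blast
  with ore have "left_ore S"
    unfolding left_ore_def left_ore_elem_def by blast
  moreover have "\<forall>r. \<forall>s\<in>S. r * s = 0 \<longrightarrow> (\<exists>t\<in>S. t * r = 0)"
  proof (intro allI ballI impI)
    fix r s assume "s \<in> S" "r * s = 0"
    then have "r = 0" using regular[OF \<open>s \<in> S\<close>] unfolding regular_def by blast
    with one show "\<exists>t\<in>S. t * r = 0" by auto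
  qed
  moreover have "ass S = {0}"
  proof
    show "ass S \<subseteq> {0}"
    proof
      fix r assume "r \<in> ass S"
      then obtain s where "s \<in> S" "s * r = 0" by (auto simp: ass_def)
      then show "r \<in> {0}" using regular[OF \<open>s \<in> S\<close>] unfolding regular_def by blast
    qed
    show "{0} \<subseteq> ass S"
      using one unfolding ass_def by auto
  qed
  ultimately show "S \<in> Den_l0"
    unfolding Den_l0_def left_den_def by simp
qed

text \<open>The generator \<open>1\<close> is needed only for \<open>A = {}\<close>, whose supremum is \<open>{1}\<close>.\<close>

definition Den_sup :: "'a::ring_1 set set \<Rightarrow> 'a set" where
  "Den_sup A = gen_subsemigroup (insert 1 (\<Union>A))"

lemma Den_sup_upper: "S \<in> A \<Longrightarrow> S \<subseteq> Den_sup A"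
  unfolding Den_sup_def using gen_subsemigroup_subset[of "insert 1 (\<Union>A)"] by blast

lemma Den_sup_least:
  assumes "T \<in> Den_l0" and "\<And>S. S \<in> A \<Longrightarrow> S \<subseteq> T"
  shows "Den_sup A \<subseteq> T"
proof -
  from assms(1) have "1 \<in> T" and "\<forall>a\<in>T. \<forall>b\<in>T. a * b \<in> T"
    by (simp_all add: Den_l0_iff)
  moreover have "\<Union>A \<subseteq> T"
    using assms(2) by blast
  ultimately show ?thesis
    unfolding Den_sup_def by (intro gen_subsemigroup_least) simp_all
qed

lemma Den_sup_in_Den_l0:
  assumes "A \<subseteq> Den_l0"
  shows "Den_sup A \<in> Den_l0"
proof -
  let ?G = "Den_sup A"
  have one: "1 \<in> ?G"
    unfolding Den_sup_def using gen_subsemigroup_subset[of "insert 1 (\<Union>A)"] by blast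
  have closed: "\<And>a b. a \<in> ?G \<Longrightarrow> b \<in> ?G \<Longrightarrow> a * b \<in> ?G"
    unfolding Den_sup_def by (rule gen_subsemigroup_mult)
  have gens: "regular a \<and> left_ore_elem ?G a" if "a \<in> insert 1 (\<Union>A)" for a
    using that
  proof
    assume "a = 1"
    then show ?thesis using left_ore_elem_one[OF one] by (simp add: regular_def)
  next
    assume "a \<in> \<Union>A"
    then obtain S where "S \<in> A" "a \<in> S" by blast
    with assms have "S \<in> Den_l0" by blast
    then have "\<forall>s\<in>S. regular s \<and> left_ore_elem S s"
      by (simp add: Den_l0_iff)
    with \<open>a \<in> S\<close> show ?thesis
      using left_ore_elem_mono[OF Den_sup_upper[OF \<open>S \<in> A\<close>]] by blast
  qed
  have "regular s \<and> left_ore_elem ?G s" if "s \<in> ?G" for s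
  proof -
    from that have "s \<in> gen_subsemigroup (insert 1 (\<Union>A))"
      by (simp only: Den_sup_def)
    then show ?thesis
    proof (induction rule: gen_subsemigroup_induct)
      case (base a)
      then show ?case by (rule gens)
    next
      case (mult x y)
      then show ?case using regular_mult left_ore_elem_mult[OF closed] by blast
    qed
  qed
  then have "\<forall>s\<in>?G. regular s \<and> left_ore_elem ?G s" by blast
  moreover have "\<forall>a\<in>?G. \<forall>b\<in>?G. a * b \<in> ?G" using closed by blast
  ultimately show ?thesis
    using one by (simp add: Den_l0_iff)
qed

lemma Den_order_simps [simp]:
  "carrier Den_order = Den_l0" "le Den_order = (\<subseteq>)" "eq Den_order = (=)"
  by (simp_all add: Den_order_def)

lemma partial_order_Den_order: "partial_order Den_order"
  by unfold_locales auto

lemma least_Den_sup: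
  assumes "A \<subseteq> Den_l0"
  shows "least Den_order (Den_sup A) (Upper Den_order A)"
proof (rule least_UpperI)
  fix T assume T: "T \<in> Upper Den_order A"
  have "S \<subseteq> T" if "S \<in> A" for S
    using Upper_memD[OF T that] assms by simp
  moreover have "T \<in> Den_l0"
    using T Upper_closed by fastforce
  ultimately show "Den_sup A \<sqsubseteq>\<^bsub>Den_order\<^esub> T"
    by (simp add: Den_sup_least)
qed (simp_all add: assms Den_sup_upper Den_sup_in_Den_l0)

lemma complete_lattice_Den_order: "complete_lattice Den_order"
proof (rule partial_order.complete_latticeI_sup[OF partial_order_Den_order])
  fix A :: "'a set set"
  assume "A \<subseteq> carrier Den_order"
  then show "\<exists>s. least Den_order s (Upper Den_order A)"
    using least_Den_sup by auto
qed

lemma sup_Den_order: "A \<subseteq> Den_l0 \<Longrightarrow> Lattice.sup Den_order A = Den_sup A"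
  by (rule partial_order.sup_eqI[OF partial_order_Den_order least_Den_sup])

lemma den_prod_eq_Den_sup: "S1 \<in> Den_l0 \<Longrightarrow> den_prod S1 S2 = Den_sup {S1, S2}"
  unfolding den_prod_def Den_sup_def by (auto simp: Den_l0_iff insert_absorb)

lemma den_prod_commute: "den_prod S1 S2 = den_prod S2 S1"
  by (simp add: den_prod_def sup_commute)

lemma den_prod_assoc: "den_prod (den_prod S1 S2) S3 = den_prod S1 (den_prod S2 S3)"
  using gen_subsemigroup_Un_gen_left[of "S1 \<union> S2" S3] gen_subsemigroup_Un_gen_left[of "S2 \<union> S3" S1]
  by (simp add: den_prod_def sup_commute sup_left_commute)

lemma comm_monoid_Den_monoid: "comm_monoid Den_monoid"
proof (rule comm_monoidI)
  fix S1 S2 :: "'a set"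
  assume "S1 \<in> carrier Den_monoid" "S2 \<in> carrier Den_monoid"
  then show "S1 \<otimes>\<^bsub>Den_monoid\<^esub> S2 \<in> carrier Den_monoid"
    by (simp add: Den_monoid_def den_prod_eq_Den_sup Den_sup_in_Den_l0)
next
  show "\<one>\<^bsub>Den_monoid\<^esub> \<in> carrier (Den_monoid :: 'a set monoid)"
    by (auto simp: Den_monoid_def Den_l0_iff regular_def left_ore_elem_one)
next
  fix S :: "'a set"
  assume "S \<in> carrier Den_monoid"
  then show "\<one>\<^bsub>Den_monoid\<^esub> \<otimes>\<^bsub>Den_monoid\<^esub> S = S"
    by (simp add: Den_monoid_def den_prod_def Den_l0_iff insert_absorb gen_subsemigroup_eq)
qed (simp_all add: Den_monoid_def den_prod_assoc, rule den_prod_commute)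

theorem corollary2p5:
  shows "comm_monoid (Den_monoid :: 'a::ring_1 set monoid)
    \<and> complete_lattice (Den_order :: 'a set gorder)
    \<and> (\<forall>S1\<in>(Den_l0 :: 'a set set). \<forall>S2\<in>Den_l0.
          den_prod S1 S2 = join Den_order S1 S2)
    \<and> (\<forall>(I :: 'i set) (F :: 'i \<Rightarrow> 'a set). F ` I \<subseteq> Den_l0 \<longrightarrow>
          infi Den_order I F = Lattice.sup Den_order {S \<in> Den_l0. S \<subseteq> (\<Inter>i\<in>I. F i)})"
proof (intro conjI ballI allI impI)
  fix I :: "'i set" and F :: "'i \<Rightarrow> 'a set"
  assume F: "F ` I \<subseteq> Den_l0"
  have "infi Den_order I F = Lattice.inf Den_order (F ` I)"
    by (simp add: infi_def)
  also have "\<dots> = Lattice.sup Den_order (Lower Den_order (F ` I))"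
    using complete_lattice.inf_eq_sup_Lower[OF complete_lattice_Den_order] F by simp
  also have "Lower Den_order (F ` I) = {S \<in> Den_l0. S \<subseteq> (\<Inter>i\<in>I. F i)}"
    using F by (auto simp: Lower_def)
  finally show "infi Den_order I F = Lattice.sup Den_order {S \<in> Den_l0. S \<subseteq> (\<Inter>i\<in>I. F i)}" .
qed (simp_all add: comm_monoid_Den_monoid complete_lattice_Den_order join_def sup_Den_order
  den_prod_eq_Den_sup)

end
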